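(* Consider an isotropic shift-invariant vector Volterra lattice on the sphere \[ V_{n,x}=f_nV_{n+1}+g_nV_n+h_nV_{n-1},\qquad n\in\mathbb Z, \] with $f,g,h$ scalar functions of $v_{1,0},v_{0,-1},v_{1,-1}$, $f,h\neq0$, satisfying the first integrability conditions \[ D_x(\log f)\in\operatorname{Im}(T-1),\qquad D_x(\log h)\in\operatorname{Im}(T-1). \] Then the dependence of $f,h$ on $v_{1,-1}$ is one of the following: Case 1: there are functions $a$ of one variable and $b$ of two variables such that \[ f=\frac{a(v_{0,-1})}{v_{1,-1}+b(v_{1,0},v_{0,-1})},\qquad h=-\frac{a(v_{1,0})}{v_{1,-1}+b(v_{1,0},v_{0,-1})}; \] Case 2: $f=f(v_{1,0},v_{0,-1})$ and $h=h(v_{1,0},v_{0,-1})$ do not depend on $v_{1,-1}$.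
   Context: Vectors $V_n$ lie in a space with symmetric scalar product, $v_{m,n}=\langle V_m,V_n\rangle=v_{n,m}$, $v_{n,n}=1$; the $v_{m,n}$, $m>n$, are treated as independent variables (the lattice must work for any dimension and scalar product), and $v_{1,0}f+g+v_{0,-1}h=0$. $T$ is the shift $n\mapsto n+1$, $T(a(v_{m,n}))=a(v_{m+1,n+1})$, $f_n=T^n(f)$. $D_x$ is the total $x$-derivative along the lattice, $D_x(v_{m,n})=\langle V_{m,x},V_n\rangle+\langle V_m,V_{n,x}\rangle$. $\operatorname{Im}(T-1)$ denotes the set of expressions $(T-1)(\sigma)$ with $\sigma$ a function of finitely many $v_{m,n}$. *)

theory Defs
  imports "HOL-Analysis.Analysis"
begin

text \<open>An assignment of values to the scalar products: u (m,n) is the value of v_{m,n}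
  (only pairs with m > n are meaningful; the v_{m,n}, m > n, are independent variables).\<close>
type_synonym assignment = "int \<times> int \<Rightarrow> real"

definition sp :: "assignment \<Rightarrow> int \<Rightarrow> int \<Rightarrow> real" where
  "sp u i j = (if i = j then 1 else if j < i then u (i, j) else u (j, i))"

text \<open>f_n = T^n f, where f is a function of (v_{1,0}, v_{0,-1}, v_{1,-1}).\<close>
definition shiftf :: "(real \<Rightarrow> real \<Rightarrow> real \<Rightarrow> real) \<Rightarrow> int \<Rightarrow> assignment \<Rightarrow> real" where
  "shiftf f n u = f (u (n + 1, n)) (u (n, n - 1)) (u (n + 1, n - 1))"

text \<open>g is determined by v_{1,0} f + g + v_{0,-1} h = 0.\<close>
definition gfun :: "(real \<Rightarrow> real \<Rightarrow> real \<Rightarrow> real) \<Rightarrow> (real \<Rightarrow> real \<Rightarrow> real \<Rightarrow> real)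
    \<Rightarrow> int \<Rightarrow> assignment \<Rightarrow> real" where
  "gfun f h n u = - (u (n + 1, n) * shiftf f n u + u (n, n - 1) * shiftf h n u)"

text \<open>D_x(v_{m,n}) = <V_{m,x},V_n> + <V_m,V_{n,x}> along the lattice
  V_{n,x} = f_n V_{n+1} + g_n V_n + h_n V_{n-1}.\<close>
definition Dv :: "(real \<Rightarrow> real \<Rightarrow> real \<Rightarrow> real) \<Rightarrow> (real \<Rightarrow> real \<Rightarrow> real \<Rightarrow> real)
    \<Rightarrow> int \<times> int \<Rightarrow> assignment \<Rightarrow> real" where
  "Dv f h p u = (case p of (m, n) \<Rightarrow>
       shiftf f m u * sp u (m + 1) n + gfun f h m u * sp u m n + shiftf h m u * sp u (m - 1) n
     + shiftf f n u * sp u m (n + 1) + gfun f h n u * sp u m n + shiftf h n u * sp u m (n - 1))"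

definition depends_only_on :: "(assignment \<Rightarrow> real) \<Rightarrow> (int \<times> int) set \<Rightarrow> bool" where
  "depends_only_on \<sigma> S \<longleftrightarrow> (\<forall>u u'. (\<forall>p\<in>S. u p = u' p) \<longrightarrow> \<sigma> u = \<sigma> u')"

definition Dx :: "(real \<Rightarrow> real \<Rightarrow> real \<Rightarrow> real) \<Rightarrow> (real \<Rightarrow> real \<Rightarrow> real \<Rightarrow> real)
    \<Rightarrow> (int \<times> int) set \<Rightarrow> (assignment \<Rightarrow> real) \<Rightarrow> assignment \<Rightarrow> real" where
  "Dx f h S \<sigma> u = (\<Sum>p\<in>S. deriv (\<lambda>t. \<sigma> (u(p := t))) (u p) * Dv f h p u)"

definition Tshift :: "(assignment \<Rightarrow> real) \<Rightarrow> assignment \<Rightarrow> real" where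
  "Tshift \<sigma> u = \<sigma> (\<lambda>(m, n). u (m + 1, n + 1))"

text \<open>Domain of the variables: all f_n, h_n are evaluated inside A \<times> A \<times> B.\<close>
definition Omega :: "real set \<Rightarrow> real set \<Rightarrow> assignment set" where
  "Omega A B = {u. \<forall>n. u (n + 1, n) \<in> A \<and> u (n + 1, n - 1) \<in> B}"

definition S0 :: "(int \<times> int) set" where
  "S0 = {(1, 0), (0, -1), (1, -1)}"

text \<open>D_x(log q_0) \<in> Im(T-1) on the domain, where q_0 = q(v_{1,0},v_{0,-1},v_{1,-1})
  and D_x(log q_0) = D_x(q_0)/q_0.\<close>
definition log_deriv_in_Im :: "(real \<Rightarrow> real \<Rightarrow> real \<Rightarrow> real) \<Rightarrow> (real \<Rightarrow> real \<Rightarrow> real \<Rightarrow> real)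
    \<Rightarrow> real set \<Rightarrow> real set \<Rightarrow> (real \<Rightarrow> real \<Rightarrow> real \<Rightarrow> real) \<Rightarrow> bool" where
  "log_deriv_in_Im f h A B q \<longleftrightarrow>
     (\<exists>\<sigma> S. finite S \<and> S \<subseteq> {(m, n). n < m} \<and> depends_only_on \<sigma> S \<and>
        (\<forall>u\<in>Omega A B. Dx f h S0 (shiftf q 0) u / shiftf q 0 u = Tshift \<sigma> u - \<sigma> u))"

end

theory Submission
  imports Defs
begin

text \<open>Perturbing the single variable v_{2,-1} changes T^k(D_x log q_0) only for k = 0 and k = 1:
  through the term f_1 v_{2,-1} of D_x v_{1,-1}, and through the term h_{-1} v_{1,-2} of
  D_x v_{1,-1}, which T turns into h_0 v_{2,-1}.
  For an element (T - 1)\<sigma> of Im(T - 1) with \<sigma> local, the perturbations of all shifts telescope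
  to zero, so (\<partial>_3 log q)_0 f_1 + (\<partial>_3 log q)_1 h_0 = 0 identically.  Writing x, y, z for
  v_{1,0}, v_{0,-1}, v_{1,-1}, separation of variables gives
  \<partial>_z q = \<phi>(x) q h = -\<phi>(y) q f for q = f (and similarly with \<psi> for q = h).  Hence f solves
  the Riccati equation \<partial>_z f = -\<phi>(y) f^2, so 1/f is affine in z with slope \<phi>(y), and
  \<phi>(x) h = -\<phi>(y) f.  If \<phi> vanishes nowhere this is case 1; if \<phi> vanishes identically, f does
  not depend on z, and then \<psi>(x) h = -\<psi>(y) f forces \<psi> = 0, so h does not depend on z either.\<close>

definition shift :: "int \<Rightarrow> assignment \<Rightarrow> assignment" where
  "shift k u = (\<lambda>(m, n). u (m + k, n + k))"

lemma shift_0 [simp]: "shift 0 u = u"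
  by (simp add: shift_def)

lemma shift_shift [simp]: "shift j (shift k u) = shift (j + k) u"
  by (simp add: shift_def fun_eq_iff algebra_simps)

lemma Tshift_eq_shift: "Tshift \<sigma> u = \<sigma> (shift 1 u)"
  by (simp add: Tshift_def shift_def)

lemma shift_in_Omega: "u \<in> Omega A B \<Longrightarrow> shift k u \<in> Omega A B"
  unfolding Omega_def shift_def
proof clarsimp
  fix n assume "\<forall>n. u (n + 1, n) \<in> A \<and> u (n + 1, n - 1) \<in> B"
  then show "u (n + 1 + k, n + k) \<in> A \<and> u (n + 1 + k, n - 1 + k) \<in> B"
    by (metis add.commute add.left_commute diff_add_eq)
qed

lemma depends_only_on_shift_eventually_eq:
  assumes "finite S" and "depends_only_on \<sigma> S" and "\<And>q. q \<noteq> p \<Longrightarrow> w' q = w q"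
  obtains N :: int where "\<And>k. N \<le> \<bar>k\<bar> \<Longrightarrow> \<sigma> (shift k w') = \<sigma> (shift k w)"
proof -
  define N where "N = (\<Sum>q\<in>S. \<bar>fst q\<bar>) + \<bar>fst p\<bar> + 1"
  have "\<sigma> (shift k w') = \<sigma> (shift k w)" if k: "N \<le> \<bar>k\<bar>" for k
  proof -
    have "shift k w' q = shift k w q" if "q \<in> S" for q
    proof -
      have "\<bar>fst q\<bar> \<le> (\<Sum>q\<in>S. \<bar>fst q\<bar>)"
        using member_le_sum[OF that _ assms(1), of "\<lambda>q. \<bar>fst q\<bar>"] by simp
      then have "fst q + k \<noteq> fst p"
        using k unfolding N_def by arith
      then have "(fst q + k, snd q + k) \<noteq> p"
        by auto
      then show ?thesis
        by (simp add: shift_def case_prod_beta assms(3))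
    qed
    then show ?thesis
      using assms(2) unfolding depends_only_on_def by blast
  qed
  then show thesis by (rule that)
qed

lemma coboundary_variation_sum:
  fixes L \<sigma> :: "assignment \<Rightarrow> real" and n :: nat
  assumes "finite S" and "depends_only_on \<sigma> S"
    and differ: "\<And>q. q \<noteq> p \<Longrightarrow> w' q = w q"
    and coboundary: "\<And>k v. v \<in> {w, w'} \<Longrightarrow> L (shift k v) = \<sigma> (shift (k + 1) v) - \<sigma> (shift k v)"
    and local: "\<And>k. k < 0 \<or> int n \<le> k \<Longrightarrow> L (shift k w') = L (shift k w)"
  shows "(\<Sum>k<n. L (shift (int k) w') - L (shift (int k) w)) = 0"
proof -
  define \<Delta> where "\<Delta> k = \<sigma> (shift k w') - \<sigma> (shift k w)" for k
  have increment: "\<Delta> (k + 1) - \<Delta> k = L (shift k w') - L (shift k w)" for k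
    unfolding \<Delta>_def using coboundary[of w' k] coboundary[of w k] by simp
  obtain N where "\<And>k. N \<le> \<bar>k\<bar> \<Longrightarrow> \<sigma> (shift k w') = \<sigma> (shift k w)"
    by (rule depends_only_on_shift_eventually_eq[OF assms(1,2), of p w' w]) (use differ in auto)
  then have far: "\<And>k. N \<le> \<bar>k\<bar> \<Longrightarrow> \<Delta> k = 0"
    by (simp add: \<Delta>_def)
  have left: "\<Delta> k = \<Delta> 0" if "k \<le> 0" for k
    using that
  proof (induction k rule: int_le_induct)
    case (step i)
    then have "L (shift (i - 1) w') = L (shift (i - 1) w)"
      using local by simp
    then show ?case
      using increment[of "i - 1"] step.IH by simp
  qed simp
  have \<Delta>0: "\<Delta> 0 = 0"
    using left[of "- \<bar>N\<bar>"] far[of "- \<bar>N\<bar>"] by simp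
  have right: "\<Delta> k = \<Delta> n" if "int n \<le> k" for k
    using that
  proof (induction k rule: int_ge_induct)
    case (step i)
    then have "L (shift i w') = L (shift i w)"
      using local by simp
    then show ?case
      using increment[of i] step.IH by simp
  qed simp
  have \<Delta>n: "\<Delta> n = 0"
    using right[of "int n + \<bar>N\<bar>"] far[of "int n + \<bar>N\<bar>"] by simp
  have "(\<Sum>k<n. L (shift (int k) w') - L (shift (int k) w)) = (\<Sum>k<n. \<Delta> (int (Suc k)) - \<Delta> (int k))"
    by (rule sum.cong) (simp_all add: increment[symmetric] add.commute)
  also have "\<dots> = 0"
    using sum_lessThan_telescope[of "\<Delta> \<circ> int" n] \<Delta>0 \<Delta>n by simp
  finally show ?thesis .
qed

lemma Dx_S0_eq:
  "Dx f h S0 \<sigma> u =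
     deriv (\<lambda>t. \<sigma> (u((1, 0) := t))) (u (1, 0)) * Dv f h (1, 0) u
   + deriv (\<lambda>t. \<sigma> (u((0, -1) := t))) (u (0, -1)) * Dv f h (0, -1) u
   + deriv (\<lambda>t. \<sigma> (u((1, -1) := t))) (u (1, -1)) * Dv f h (1, -1) u"
  unfolding Dx_def S0_def by simp

definition Dlog :: "(real \<Rightarrow> real \<Rightarrow> real \<Rightarrow> real) \<Rightarrow> (real \<Rightarrow> real \<Rightarrow> real \<Rightarrow> real)
    \<Rightarrow> (real \<Rightarrow> real \<Rightarrow> real \<Rightarrow> real) \<Rightarrow> assignment \<Rightarrow> real" where
  "Dlog f h q u = Dx f h S0 (shiftf q 0) u / shiftf q 0 u"

definition stencil :: "(int \<times> int) set" where
  "stencil = {(1, 0), (0, -1), (1, -1), (2, 1), (2, 0), (-1, -2), (0, -2), (2, -1), (1, -2)}"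

lemma Dlog_depends_only_on_stencil: "depends_only_on (Dlog f h q) stencil"
  unfolding depends_only_on_def
proof (intro allI impI)
  fix u u' :: assignment
  assume "\<forall>p\<in>stencil. u p = u' p"
  then have "u (1, 0) = u' (1, 0)" "u (0, -1) = u' (0, -1)" "u (1, -1) = u' (1, -1)"
    "u (2, 1) = u' (2, 1)" "u (2, 0) = u' (2, 0)" "u (-1, -2) = u' (-1, -2)"
    "u (0, -2) = u' (0, -2)" "u (2, -1) = u' (2, -1)" "u (1, -2) = u' (1, -2)"
    by (auto simp: stencil_def)
  then show "Dlog f h q u = Dlog f h q u'"
    unfolding Dlog_def Dx_S0_eq by (simp add: Dv_def shiftf_def gfun_def sp_def)
qed

lemma Dlog_upd_2_neg1:
  "Dlog f h q (u((2, -1) := t)) = Dlog f h q u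
     + deriv (q (u (1, 0)) (u (0, -1))) (u (1, -1)) * f (u (2, 1)) (u (1, 0)) (u (2, 0))
       / q (u (1, 0)) (u (0, -1)) (u (1, -1)) * (t - u (2, -1))"
proof -
  have "Dx f h S0 (shiftf q 0) (u((2, -1) := t)) = Dx f h S0 (shiftf q 0) u
     + deriv (q (u (1, 0)) (u (0, -1))) (u (1, -1)) * f (u (2, 1)) (u (1, 0)) (u (2, 0))
       * (t - u (2, -1))"
    unfolding Dx_S0_eq by (simp add: Dv_def shiftf_def gfun_def sp_def algebra_simps)
  then show ?thesis
    by (simp add: Dlog_def shiftf_def add_divide_distrib)
qed

lemma Dlog_upd_1_neg2:
  "Dlog f h q (u((1, -2) := t)) = Dlog f h q u
     + deriv (q (u (1, 0)) (u (0, -1))) (u (1, -1)) * h (u (0, -1)) (u (-1, -2)) (u (0, -2))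
       / q (u (1, 0)) (u (0, -1)) (u (1, -1)) * (t - u (1, -2))"
proof -
  have "Dx f h S0 (shiftf q 0) (u((1, -2) := t)) = Dx f h S0 (shiftf q 0) u
     + deriv (q (u (1, 0)) (u (0, -1))) (u (1, -1)) * h (u (0, -1)) (u (-1, -2)) (u (0, -2))
       * (t - u (1, -2))"
    unfolding Dx_S0_eq by (simp add: Dv_def shiftf_def gfun_def sp_def algebra_simps)
  then show ?thesis
    by (simp add: Dlog_def shiftf_def add_divide_distrib)
qed

lemma log_deriv_in_Im_variation:
  assumes "log_deriv_in_Im f h A B q" and "w \<in> Omega A B"
  shows "deriv (q (w (1, 0)) (w (0, -1))) (w (1, -1)) * f (w (2, 1)) (w (1, 0)) (w (2, 0))
           / q (w (1, 0)) (w (0, -1)) (w (1, -1))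
         + deriv (q (w (2, 1)) (w (1, 0))) (w (2, 0)) * h (w (1, 0)) (w (0, -1)) (w (1, -1))
           / q (w (2, 1)) (w (1, 0)) (w (2, 0)) = 0"
proof -
  obtain \<sigma> S where "finite S" and "depends_only_on \<sigma> S"
    and coboundary: "\<And>u. u \<in> Omega A B \<Longrightarrow> Dlog f h q u = Tshift \<sigma> u - \<sigma> u"
    using assms(1) unfolding log_deriv_in_Im_def Dlog_def by blast
  define w' where "w' = w((2, -1) := w (2, -1) + 1)"
  have "w' \<in> Omega A B"
    using assms(2) unfolding w'_def Omega_def by auto
  have "(\<Sum>k<2. Dlog f h q (shift (int k) w') - Dlog f h q (shift (int k) w)) = 0"
  proof (rule coboundary_variation_sum[OF \<open>finite S\<close> \<open>depends_only_on \<sigma> S\<close>, where p = "(2, -1)"])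
    show "w' p = w p" if "p \<noteq> (2, -1)" for p
      using that by (simp add: w'_def)
    show "Dlog f h q (shift k v) = \<sigma> (shift (k + 1) v) - \<sigma> (shift k v)" if "v \<in> {w, w'}" for k v
      using coboundary[OF shift_in_Omega] that assms(2) \<open>w' \<in> Omega A B\<close>
      by (auto simp: Tshift_eq_shift add.commute)
    show "Dlog f h q (shift k w') = Dlog f h q (shift k w)" if "k < 0 \<or> int 2 \<le> k" for k
    proof -
      have "\<forall>p\<in>stencil. shift k w' p = shift k w p"
        using that by (auto simp: stencil_def shift_def w'_def)
      then show ?thesis
        using Dlog_depends_only_on_stencil unfolding depends_only_on_def by blast
    qed
  qed
  then have "(Dlog f h q w' - Dlog f h q w) + (Dlog f h q (shift 1 w') - Dlog f h q (shift 1 w)) = 0"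
    by (simp add: numeral_2_eq_2)
  moreover have "Dlog f h q w' - Dlog f h q w =
      deriv (q (w (1, 0)) (w (0, -1))) (w (1, -1)) * f (w (2, 1)) (w (1, 0)) (w (2, 0))
        / q (w (1, 0)) (w (0, -1)) (w (1, -1))"
    unfolding w'_def Dlog_upd_2_neg1 by simp
  moreover have "Dlog f h q (shift 1 w') - Dlog f h q (shift 1 w) =
      deriv (q (w (2, 1)) (w (1, 0))) (w (2, 0)) * h (w (1, 0)) (w (0, -1)) (w (1, -1))
        / q (w (2, 1)) (w (1, 0)) (w (2, 0))"
  proof -
    have "shift 1 w' = (shift 1 w)((1, -2) := shift 1 w (1, -2) + 1)"
      by (auto simp: shift_def w'_def fun_eq_iff)
    then show ?thesis
      by (simp add: Dlog_upd_1_neg2) (simp add: shift_def)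
  qed
  ultimately show ?thesis
    by linarith
qed

lemma Omega_extension:
  assumes "x \<in> A" "y \<in> A" "X \<in> A" "z \<in> B" "Z \<in> B"
  obtains w where "w \<in> Omega A B"
    and "w (1, 0) = x" "w (0, -1) = y" "w (2, 1) = X" "w (1, -1) = z" "w (2, 0) = Z"
proof
  define w :: assignment where "w = (\<lambda>(m, n).
    if (m, n) = (1, 0) then x else if (m, n) = (0, -1) then y else if (m, n) = (2, 1) then X
    else if (m, n) = (1, -1) then z else if (m, n) = (2, 0) then Z
    else if m = n + 1 then x else if m = n + 2 then z else 0)"
  show "w \<in> Omega A B"
    using assms unfolding Omega_def w_def by auto
  show "w (1, 0) = x" "w (0, -1) = y" "w (2, 1) = X" "w (1, -1) = z" "w (2, 0) = Z"
    unfolding w_def by auto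
qed

lemma log_deriv_in_Im_functional_equation:
  assumes "log_deriv_in_Im f h A B q" and "x \<in> A" "y \<in> A" "X \<in> A" "z \<in> B" "Z \<in> B"
  shows "deriv (q x y) z * f X x Z / q x y z + deriv (q X x) Z * h x y z / q X x Z = 0"
proof -
  obtain w where "w \<in> Omega A B"
    and "w (1, 0) = x" "w (0, -1) = y" "w (2, 1) = X" "w (1, -1) = z" "w (2, 0) = Z"
    using Omega_extension[OF assms(2-6)] .
  then show ?thesis
    using log_deriv_in_Im_variation[OF assms(1)] by metis
qed

lemma has_real_derivative_third_argument:
  fixes f :: "real \<Rightarrow> real \<Rightarrow> real \<Rightarrow> real"
  assumes "open A" "open B" "(\<lambda>(x, y, z). f x y z) differentiable_on (A \<times> A \<times> B)"
    and "x \<in> A" "y \<in> A" "z \<in> B"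
  shows "(f x y has_real_derivative deriv (f x y) z) (at z)"
proof -
  have "(\<lambda>(x, y, z). f x y z) differentiable (at (x, y, z))"
    using assms by (simp add: differentiable_on_eq_differentiable_at open_Times)
  then have "((\<lambda>(x, y, z). f x y z) \<circ> (\<lambda>t. (x, y, t))) differentiable (at z)"
    by (intro differentiable_chain_at) simp_all
  then have "f x y differentiable (at z)"
    by (simp add: o_def)
  then show ?thesis
    using DERIV_deriv_iff_real_differentiable by blast
qed

lemma inverse_affine_if_riccati:
  fixes g :: "real \<Rightarrow> real"
  assumes "open B" "connected B" "b0 \<in> B" "z \<in> B"
    and nonzero: "\<And>t. t \<in> B \<Longrightarrow> g t \<noteq> 0"
    and riccati: "\<And>t. t \<in> B \<Longrightarrow> (g has_real_derivative - c * (g t)\<^sup>2) (at t)"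
  shows "inverse (g z) = inverse (g b0) + c * (z - b0)"
proof -
  have "((\<lambda>t. inverse (g t) - c * t) has_real_derivative 0) (at t)" if "t \<in> B" for t
  proof -
    have "((\<lambda>t. inverse (g t)) has_real_derivative c) (at t)"
      using nonzero[OF that]
      by (intro DERIV_cong[OF DERIV_inverse_fun[OF riccati nonzero, OF that that]])
        (simp add: power2_eq_square field_simps)
    then show ?thesis
      by (rule DERIV_cong[OF DERIV_diff[OF _ DERIV_cmult_Id]]) simp_all
  qed
  moreover from this have "continuous_on B (\<lambda>t. inverse (g t) - c * t)"
    by (intro continuous_at_imp_continuous_on) (auto intro: DERIV_continuous)
  ultimately obtain k where "\<And>t. t \<in> B \<Longrightarrow> inverse (g t) - c * t = k"
    using DERIV_zero_connected_constant[OF \<open>connected B\<close> \<open>open B\<close> finite.emptyI] by blast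
  from this[OF \<open>z \<in> B\<close>] this[OF \<open>b0 \<in> B\<close>] show ?thesis
    by (simp add: algebra_simps)
qed

lemma separation_of_variables:
  assumes "\<And>x y X z Z. x \<in> A \<Longrightarrow> y \<in> A \<Longrightarrow> X \<in> A \<Longrightarrow> z \<in> B \<Longrightarrow> Z \<in> B \<Longrightarrow> F x y z = G X x Z"
  obtains \<phi> where "\<And>x y z. x \<in> A \<Longrightarrow> y \<in> A \<Longrightarrow> z \<in> B \<Longrightarrow> F x y z = \<phi> x \<and> G x y z = \<phi> y"
proof (cases "A = {} \<or> B = {}")
  case False
  then obtain a0 b0 where "a0 \<in> A" "b0 \<in> B"
    by blast
  then show thesis
    using assms by (intro that[of "\<lambda>x. F x a0 b0"]) metis
qed (use that in blast)

lemma logarithmic_derivative_separates: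
  fixes f h q qz :: "real \<Rightarrow> real \<Rightarrow> real \<Rightarrow> real"
  assumes nonzero: "\<And>x y z. x \<in> A \<Longrightarrow> y \<in> A \<Longrightarrow> z \<in> B \<Longrightarrow> f x y z \<noteq> 0 \<and> h x y z \<noteq> 0 \<and> q x y z \<noteq> 0"
    and equation: "\<And>x y X z Z. x \<in> A \<Longrightarrow> y \<in> A \<Longrightarrow> X \<in> A \<Longrightarrow> z \<in> B \<Longrightarrow> Z \<in> B \<Longrightarrow>
      qz x y z * f X x Z / q x y z + qz X x Z * h x y z / q X x Z = 0"
  obtains \<phi> where "\<And>x y z. x \<in> A \<Longrightarrow> y \<in> A \<Longrightarrow> z \<in> B \<Longrightarrow>
    qz x y z = \<phi> x * q x y z * h x y z \<and> qz x y z = - \<phi> y * q x y z * f x y z"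
proof -
  have "qz x y z / (q x y z * h x y z) = - qz X x Z / (q X x Z * f X x Z)"
    (is "?F x y z = ?G X x Z")
    if "x \<in> A" "y \<in> A" "X \<in> A" "z \<in> B" "Z \<in> B" for x y X z Z
    using equation[OF that] nonzero[of x y z] nonzero[of X x Z] that
    by (simp add: field_simps)
  then obtain \<phi> where \<phi>: "\<And>x y z. x \<in> A \<Longrightarrow> y \<in> A \<Longrightarrow> z \<in> B \<Longrightarrow>
      qz x y z / (q x y z * h x y z) = \<phi> x \<and> - qz x y z / (q x y z * f x y z) = \<phi> y"
    using separation_of_variables[where F = ?F and G = ?G] by blast
  show thesis
  proof (rule that)
    fix x y z assume "x \<in> A" "y \<in> A" "z \<in> B"
    with \<phi>[of x y z] nonzero[of x y z]
    show "qz x y z = \<phi> x * q x y z * h x y z \<and> qz x y z = - \<phi> y * q x y z * f x y z"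
      by (auto simp: field_simps)
  qed
qed

lemma reciprocal_linear_form:
  fixes f h :: "real \<Rightarrow> real \<Rightarrow> real \<Rightarrow> real" and c :: "real \<Rightarrow> real"
  assumes inverse_f: "\<And>x y z. x \<in> A \<Longrightarrow> y \<in> A \<Longrightarrow> z \<in> B \<Longrightarrow>
      inverse (f x y z) = inverse (f x y b0) + c y * (z - b0)"
    and relation: "\<And>x y z. x \<in> A \<Longrightarrow> y \<in> A \<Longrightarrow> z \<in> B \<Longrightarrow> c x * h x y z = - c y * f x y z"
    and nonzero: "\<And>x. x \<in> A \<Longrightarrow> c x \<noteq> 0"
  shows "\<exists>a b. \<forall>x\<in>A. \<forall>y\<in>A. \<forall>z\<in>B.
    f x y z = a y / (z + b x y) \<and> h x y z = - a x / (z + b x y)"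
proof (intro exI ballI)
  fix x y z assume xyz: "x \<in> A" "y \<in> A" "z \<in> B"
  define b where "b x y = (inverse (f x y b0) - c y * b0) / c y" for x y
  have "c y * (z + b x y) = c y * z + (inverse (f x y b0) - c y * b0)"
    using nonzero[OF xyz(2)] by (simp add: b_def field_simps)
  then have "inverse (f x y z) = c y * (z + b x y)"
    using inverse_f[OF xyz] by (simp add: algebra_simps)
  then have f: "f x y z = inverse (c y) / (z + b x y)"
    by (metis divide_inverse inverse_inverse_eq inverse_mult_distrib mult.commute)
  have "h x y z = - c y * f x y z / c x"
    using relation[OF xyz] nonzero[OF xyz(1)] by (simp add: field_simps)
  then have "h x y z = - inverse (c x) / (z + b x y)"
    using nonzero[OF xyz(1)] nonzero[OF xyz(2)] unfolding f
    by (simp add: divide_inverse inverse_mult_distrib ac_simps)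
  with f show "f x y z = inverse (c y) / (z + b x y) \<and> h x y z = - inverse (c x) / (z + b x y)"
    by blast
qed

lemma open_real_set_not_singleton:
  fixes B :: "real set"
  assumes "open B" and "b0 \<in> B"
  obtains z where "z \<in> B" and "z \<noteq> b0"
proof -
  have "B \<noteq> {b0}"
    using \<open>open B\<close> not_open_singleton[of b0] by auto
  with \<open>b0 \<in> B\<close> show thesis
    using that by blast
qed

lemma reciprocal_linear_or_independent:
  fixes f h fz hz :: "real \<Rightarrow> real \<Rightarrow> real \<Rightarrow> real"
  assumes "open B" and "connected B"
    and nonzero: "\<And>x y z. x \<in> A \<Longrightarrow> y \<in> A \<Longrightarrow> z \<in> B \<Longrightarrow> f x y z \<noteq> 0 \<and> h x y z \<noteq> 0"
    and f_deriv: "\<And>x y z. x \<in> A \<Longrightarrow> y \<in> A \<Longrightarrow> z \<in> B \<Longrightarrow> (f x y has_real_derivative fz x y z) (at z)"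
    and h_deriv: "\<And>x y z. x \<in> A \<Longrightarrow> y \<in> A \<Longrightarrow> z \<in> B \<Longrightarrow> (h x y has_real_derivative hz x y z) (at z)"
    and f_equation: "\<And>x y X z Z. x \<in> A \<Longrightarrow> y \<in> A \<Longrightarrow> X \<in> A \<Longrightarrow> z \<in> B \<Longrightarrow> Z \<in> B \<Longrightarrow>
      fz x y z * f X x Z / f x y z + fz X x Z * h x y z / f X x Z = 0"
    and h_equation: "\<And>x y X z Z. x \<in> A \<Longrightarrow> y \<in> A \<Longrightarrow> X \<in> A \<Longrightarrow> z \<in> B \<Longrightarrow> Z \<in> B \<Longrightarrow>
      hz x y z * f X x Z / h x y z + hz X x Z * h x y z / h X x Z = 0"
  shows "(\<exists>a b. \<forall>x\<in>A. \<forall>y\<in>A. \<forall>z\<in>B. f x y z = a y / (z + b x y) \<and> h x y z = - a x / (z + b x y))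
    \<or> (\<exists>F H. \<forall>x\<in>A. \<forall>y\<in>A. \<forall>z\<in>B. f x y z = F x y \<and> h x y z = H x y)"
proof (cases "A = {} \<or> B = {}")
  case False
  then obtain a0 b0 where "a0 \<in> A" "b0 \<in> B"
    by blast
  obtain \<phi> where \<phi>: "\<And>x y z. x \<in> A \<Longrightarrow> y \<in> A \<Longrightarrow> z \<in> B \<Longrightarrow>
      fz x y z = \<phi> x * f x y z * h x y z \<and> fz x y z = - \<phi> y * f x y z * f x y z"
    using logarithmic_derivative_separates[of A B f h f fz] nonzero f_equation by blast
  obtain \<psi> where \<psi>: "\<And>x y z. x \<in> A \<Longrightarrow> y \<in> A \<Longrightarrow> z \<in> B \<Longrightarrow>
      hz x y z = \<psi> x * h x y z * h x y z \<and> hz x y z = - \<psi> y * h x y z * f x y z"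
    using logarithmic_derivative_separates[of A B f h h hz] nonzero h_equation by blast
  have \<phi>_relation: "\<phi> x * h x y z = - \<phi> y * f x y z"
    if "x \<in> A" "y \<in> A" "z \<in> B" for x y z
  proof -
    have "f x y z * (\<phi> x * h x y z) = f x y z * (- \<phi> y * f x y z)"
      using \<phi>[OF that] by (simp add: algebra_simps)
    then show ?thesis
      using nonzero[OF that] by (metis mult_left_cancel)
  qed
  have \<psi>_relation: "\<psi> x * h x y z = - \<psi> y * f x y z"
    if "x \<in> A" "y \<in> A" "z \<in> B" for x y z
  proof -
    have "h x y z * (\<psi> x * h x y z) = h x y z * (- \<psi> y * f x y z)"
      using \<psi>[OF that] by (simp add: algebra_simps)
    then show ?thesis
      using nonzero[OF that] by (metis mult_left_cancel)
  qed
  have inverse_f: "inverse (f x y z) = inverse (f x y b0) + \<phi> y * (z - b0)"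
    if "x \<in> A" "y \<in> A" "z \<in> B" for x y z
  proof (rule inverse_affine_if_riccati[OF \<open>open B\<close> \<open>connected B\<close> \<open>b0 \<in> B\<close> \<open>z \<in> B\<close>])
    fix t assume "t \<in> B"
    then show "f x y t \<noteq> 0"
      using nonzero that by blast
    have "fz x y t = - \<phi> y * (f x y t)\<^sup>2"
      using \<phi>[OF that(1,2) \<open>t \<in> B\<close>] by (simp add: power2_eq_square)
    then show "(f x y has_real_derivative - \<phi> y * (f x y t)\<^sup>2) (at t)"
      using f_deriv[OF that(1,2) \<open>t \<in> B\<close>] by simp
  qed
  have inverse_h: "inverse (h x y z) = inverse (h x y b0) + - \<psi> x * (z - b0)"
    if "x \<in> A" "y \<in> A" "z \<in> B" for x y z
  proof (rule inverse_affine_if_riccati[OF \<open>open B\<close> \<open>connected B\<close> \<open>b0 \<in> B\<close> \<open>z \<in> B\<close>])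
    fix t assume "t \<in> B"
    then show "h x y t \<noteq> 0"
      using nonzero that by blast
    have "hz x y t = - (- \<psi> x) * (h x y t)\<^sup>2"
      using \<psi>[OF that(1,2) \<open>t \<in> B\<close>] by (simp add: power2_eq_square)
    then show "(h x y has_real_derivative - (- \<psi> x) * (h x y t)\<^sup>2) (at t)"
      using h_deriv[OF that(1,2) \<open>t \<in> B\<close>] by simp
  qed
  show ?thesis
  proof (cases "\<exists>y\<in>A. \<phi> y \<noteq> 0")
    case True
    then obtain y1 where "y1 \<in> A" "\<phi> y1 \<noteq> 0"
      by blast
    then have "\<phi> x \<noteq> 0" if "x \<in> A" for x
      using \<phi>_relation[OF that \<open>y1 \<in> A\<close> \<open>b0 \<in> B\<close>] nonzero[OF that \<open>y1 \<in> A\<close> \<open>b0 \<in> B\<close>] by auto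
    then show ?thesis
      by (intro disjI1 reciprocal_linear_form[OF inverse_f \<phi>_relation])
  next
    case False
    then have f_independent: "f x y z = f x y b0" if "x \<in> A" "y \<in> A" "z \<in> B" for x y z
      using inverse_f[OF that] that by simp
    have "\<psi> x = 0" if "x \<in> A" for x
    proof (rule ccontr)
      assume "\<psi> x \<noteq> 0"
      obtain z1 where "z1 \<in> B" "z1 \<noteq> b0"
        using open_real_set_not_singleton[OF \<open>open B\<close> \<open>b0 \<in> B\<close>] .
      have "\<psi> x * h x a0 z1 = \<psi> x * h x a0 b0"
        using \<psi>_relation[OF that \<open>a0 \<in> A\<close> \<open>z1 \<in> B\<close>] \<psi>_relation[OF that \<open>a0 \<in> A\<close> \<open>b0 \<in> B\<close>]
          f_independent[OF that \<open>a0 \<in> A\<close> \<open>z1 \<in> B\<close>] by simp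
      then have "\<psi> x * (z1 - b0) = 0"
        using inverse_h[OF that \<open>a0 \<in> A\<close> \<open>z1 \<in> B\<close>] \<open>\<psi> x \<noteq> 0\<close> by simp
      with \<open>\<psi> x \<noteq> 0\<close> \<open>z1 \<noteq> b0\<close> show False
        by simp
    qed
    then have "h x y z = h x y b0" if "x \<in> A" "y \<in> A" "z \<in> B" for x y z
      using inverse_h[OF that] that by simp
    with f_independent have "\<forall>x\<in>A. \<forall>y\<in>A. \<forall>z\<in>B. f x y z = f x y b0 \<and> h x y z = h x y b0"
      by blast
    then show ?thesis
      by (intro disjI2 exI[of _ "\<lambda>x y. f x y b0"] exI[of _ "\<lambda>x y. h x y b0"])
  qed
qed blast

theorem mainTheorem3:
  fixes f h :: "real \<Rightarrow> real \<Rightarrow> real \<Rightarrow> real" and A B :: "real set"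
  assumes "open A" and "open B" and "connected B"
    and "(\<lambda>(x, y, z). f x y z) differentiable_on (A \<times> A \<times> B)"
    and "(\<lambda>(x, y, z). h x y z) differentiable_on (A \<times> A \<times> B)"
    and "\<forall>x\<in>A. \<forall>y\<in>A. \<forall>z\<in>B. f x y z \<noteq> 0 \<and> h x y z \<noteq> 0"
    and "log_deriv_in_Im f h A B f"
    and "log_deriv_in_Im f h A B h"
  shows "(\<exists>a :: real \<Rightarrow> real. \<exists>b :: real \<Rightarrow> real \<Rightarrow> real.
            \<forall>x\<in>A. \<forall>y\<in>A. \<forall>z\<in>B.
              f x y z = a y / (z + b x y) \<and> h x y z = - a x / (z + b x y))
       \<or> (\<exists>F H :: real \<Rightarrow> real \<Rightarrow> real.
            \<forall>x\<in>A. \<forall>y\<in>A. \<forall>z\<in>B. f x y z = F x y \<and> h x y z = H x y)"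
proof (rule reciprocal_linear_or_independent[OF \<open>open B\<close> \<open>connected B\<close>,
    where fz = "\<lambda>x y z. deriv (f x y) z" and hz = "\<lambda>x y z. deriv (h x y) z"])
  fix x y X z Z assume "x \<in> A" "y \<in> A" "X \<in> A" "z \<in> B" "Z \<in> B"
  then show "deriv (f x y) z * f X x Z / f x y z + deriv (f X x) Z * h x y z / f X x Z = 0"
    and "deriv (h x y) z * f X x Z / h x y z + deriv (h X x) Z * h x y z / h X x Z = 0"
    using log_deriv_in_Im_functional_equation assms(7,8) by blast+
next
  fix x y z assume "x \<in> A" "y \<in> A" "z \<in> B"
  then show "f x y z \<noteq> 0 \<and> h x y z \<noteq> 0"
    and "(f x y has_real_derivative deriv (f x y) z) (at z)"
    and "(h x y has_real_derivative deriv (h x y) z) (at z)"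
    using assms(6) has_real_derivative_third_argument[OF assms(1,2,4)]
      has_real_derivative_third_argument[OF assms(1,2,5)] by blast+
qed

end
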